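(* Let $X^+\subseteq\mathcal A^{\mathbb N}$ be a one-sided subshift, where $\mathcal A=\{0,1,\dots,d-1\}$. For any choice of points $a^{(n)}=a^{(n)}_0a^{(n)}_1\dots\in X^+$ ($n\ge0$), let $b^{(n)}\in\mathcal A^{\mathbb Z}$ be the bisequence $0^\infty.a^{(n)}$ (i.e. $b^{(n)}_i=a^{(n)}_i$ for $i\ge0$ and $b^{(n)}_i=0$ for $i<0$), and set $x_n(a^{(n)})=\sigma^n b^{(n)}$. Then $\tilde X$ is exactly the set of all limit points of sequences $(x_n(a^{(n)}))_{n\ge0}$ (limits of convergent subsequences), taken over all choices of $a^{(n)}\in X^+$, $n\ge0$.
   Context: $\sigma$ is the shift $(\sigma x)_i=x_{i+1}$ on $\mathcal A^{\mathbb N}$ and $\mathcal A^{\mathbb Z}$, with the product topology. A one-sided subshift is a nonempty closed $\sigma$-invariant subset of $\mathcal A^{\mathbb N}$. Its natural extension is $\tilde X=\{x\in\mathcal A^{\mathbb Z}: x_px_{p+1}\dots\in X^+ \text{ for all } p\in\mathbb Z\}$. *)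

theory Defs
  imports "HOL-Analysis.Analysis"
begin

text \<open>One-sided
sequences are functions nat => nat, two-sided ones int => nat, both carrying the
product topology (Function_Topology) over the discrete space nat.\<close>

definition shift1 :: "(nat \<Rightarrow> nat) \<Rightarrow> (nat \<Rightarrow> nat)" where
  "shift1 x = (\<lambda>i. x (Suc i))"

definition shift2 :: "(int \<Rightarrow> nat) \<Rightarrow> (int \<Rightarrow> nat)" where
  "shift2 x = (\<lambda>i. x (i + 1))"

definition one_sided_subshift :: "nat \<Rightarrow> (nat \<Rightarrow> nat) set \<Rightarrow> bool" where
  "one_sided_subshift d X \<longleftrightarrow>
     X \<noteq> {} \<and> X \<subseteq> {x. \<forall>i. x i < d} \<and> closed X \<and> shift1 ` X \<subseteq> X"

definition natural_extension :: "(nat \<Rightarrow> nat) set \<Rightarrow> (int \<Rightarrow> nat) set" where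
  "natural_extension X = {x. \<forall>p::int. (\<lambda>n::nat. x (p + int n)) \<in> X}"

definition zero_pad :: "(nat \<Rightarrow> nat) \<Rightarrow> (int \<Rightarrow> nat)" where
  "zero_pad a = (\<lambda>i. if 0 \<le> i then a (nat i) else 0)"

definition subseq_limits :: "(nat \<Rightarrow> 'a::topological_space) \<Rightarrow> 'a set" where
  "subseq_limits s = {y. \<exists>r. strict_mono r \<and> (s \<circ> r) \<longlonglongrightarrow> y}"

end

theory Submission
  imports Defs
begin

text \<open>Every x in the natural extension is the limit of the whole sequence obtained by taking
  for a n the window of x starting at position -n: after shifting by n, the padded copy agrees
  with x on all coordinates i \<ge> -n. Conversely, a coordinate window of a limit point at position
  p is, from some point on, a window of a shifted a n, which lies in X; closedness of X
  transports this to the limit.\<close>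

lemma tendsto_fun_iff:
  "((f :: 'b \<Rightarrow> 'i \<Rightarrow> 'a::topological_space) \<longlongrightarrow> l) F \<longleftrightarrow> (\<forall>i. ((\<lambda>c. f c i) \<longlongrightarrow> l i) F)"
  using limitin_componentwise[of "\<lambda>i. euclidean" UNIV f l F]
  by (simp add: euclidean_product_topology)

lemma funpow_shift2: "(shift2 ^^ n) z = (\<lambda>i. z (i + int n))"
  by (induction n) (auto simp: shift2_def add.assoc)

lemma funpow_shift1: "(shift1 ^^ n) z = (\<lambda>i. z (i + n))"
  by (induction n) (auto simp: shift1_def)

lemma funpow_shift1_mem: "shift1 ` X \<subseteq> X \<Longrightarrow> x \<in> X \<Longrightarrow> (shift1 ^^ n) x \<in> X"
  by (induction n) auto

lemma funpow_shift2_zero_pad: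
  assumes "0 \<le> p + int n"
  shows "(shift2 ^^ n) (zero_pad a) (p + int k) = (shift1 ^^ nat (p + int n)) a k"
proof -
  have "nat (p + int k + int n) = k + nat (p + int n)"
    using assms by linarith
  then show ?thesis
    using assms by (simp add: funpow_shift2 funpow_shift1 zero_pad_def)
qed

lemma LIMSEQ_imp_subseq_limits: "s \<longlonglongrightarrow> y \<Longrightarrow> y \<in> subseq_limits s"
  unfolding subseq_limits_def by (auto intro!: exI[of _ id] simp: strict_mono_def o_def)

lemma LIMSEQ_shift2_zero_pad_windows:
  "(\<lambda>n. (shift2 ^^ n) (zero_pad (\<lambda>k. x (- int n + int k)))) \<longlonglongrightarrow> x"
  unfolding tendsto_fun_iff
proof
  fix i :: int
  have "\<forall>\<^sub>F n in sequentially. (shift2 ^^ n) (zero_pad (\<lambda>k. x (- int n + int k))) i = x i"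
    unfolding eventually_sequentially
    by (rule exI[of _ "nat (- i)"]) (auto simp: funpow_shift2 zero_pad_def)
  then show "((\<lambda>n. (shift2 ^^ n) (zero_pad (\<lambda>k. x (- int n + int k))) i) \<longlongrightarrow> x i) sequentially"
    by (simp add: tendsto_discrete)
qed

lemma natural_extension_imp_subseq_limit:
  assumes "x \<in> natural_extension X"
  shows "\<exists>a. (\<forall>n. a n \<in> X) \<and> x \<in> subseq_limits (\<lambda>n. (shift2 ^^ n) (zero_pad (a n)))"
proof (intro exI conjI allI)
  show "(\<lambda>k. x (- int n + int k)) \<in> X" for n
    using assms unfolding natural_extension_def by blast
  show "x \<in> subseq_limits (\<lambda>n. (shift2 ^^ n) (zero_pad (\<lambda>k. x (- int n + int k))))"
    by (rule LIMSEQ_imp_subseq_limits[OF LIMSEQ_shift2_zero_pad_windows])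
qed

lemma subseq_limit_in_natural_extension:
  assumes "closed X" and "shift1 ` X \<subseteq> X" and "\<forall>n. a n \<in> X"
    and "y \<in> subseq_limits (\<lambda>n. (shift2 ^^ n) (zero_pad (a n)))"
  shows "y \<in> natural_extension X"
  unfolding natural_extension_def
proof (clarify)
  fix p :: int
  obtain r where r: "strict_mono r"
    and lim: "((\<lambda>n. (shift2 ^^ n) (zero_pad (a n))) \<circ> r) \<longlonglongrightarrow> y"
    using assms(4) unfolding subseq_limits_def by auto
  define z where "z m = (shift1 ^^ nat (p + int (r m))) (a (r m))" for m
  have z_mem: "z m \<in> X" for m
    unfolding z_def using funpow_shift1_mem[OF assms(2)] assms(3) by blast
  have "z \<longlonglongrightarrow> (\<lambda>k. y (p + int k))"
    unfolding tendsto_fun_iff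
  proof
    fix k :: nat
    have lim_k: "\<forall>\<^sub>F m in sequentially.
        (shift2 ^^ r m) (zero_pad (a (r m))) (p + int k) = y (p + int k)"
      using lim unfolding tendsto_fun_iff by (auto simp: tendsto_discrete o_def)
    have large: "\<forall>\<^sub>F m in sequentially. nat (- p) \<le> m"
      by (auto simp: eventually_sequentially)
    have "\<forall>\<^sub>F m in sequentially. z m k = y (p + int k)"
      using lim_k large
    proof eventually_elim
      case (elim m)
      have "0 \<le> p + int (r m)"
        using seq_suble[OF r, of m] elim(2) by linarith
      then show ?case
        using elim(1) by (simp add: z_def funpow_shift2_zero_pad)
    qed
    then show "((\<lambda>m. z m k) \<longlongrightarrow> y (p + int k)) sequentially"
      by (simp add: tendsto_discrete)
  qed
  then show "(\<lambda>n. y (p + int n)) \<in> X"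
    by (rule closed_sequentially[OF assms(1) z_mem])
qed

theorem proposition5p5:
  fixes d :: nat and X :: "(nat \<Rightarrow> nat) set"
  assumes "one_sided_subshift d X"
  shows "natural_extension X =
    (\<Union>a \<in> {a :: nat \<Rightarrow> nat \<Rightarrow> nat. \<forall>n. a n \<in> X}.
       subseq_limits (\<lambda>n. (shift2 ^^ n) (zero_pad (a n))))"
proof -
  have closed: "closed X" and invariant: "shift1 ` X \<subseteq> X"
    using assms by (auto simp: one_sided_subshift_def)
  show ?thesis
  proof (intro equalityI subsetI)
    fix x assume "x \<in> natural_extension X"
    then show "x \<in> (\<Union>a \<in> {a. \<forall>n. a n \<in> X}. subseq_limits (\<lambda>n. (shift2 ^^ n) (zero_pad (a n))))"
      using natural_extension_imp_subseq_limit by blast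
  next
    fix y assume "y \<in> (\<Union>a \<in> {a. \<forall>n. a n \<in> X}. subseq_limits (\<lambda>n. (shift2 ^^ n) (zero_pad (a n))))"
    then obtain a where "\<forall>n. a n \<in> X" and "y \<in> subseq_limits (\<lambda>n. (shift2 ^^ n) (zero_pad (a n)))"
      by blast
    then show "y \<in> natural_extension X"
      using subseq_limit_in_natural_extension[OF closed invariant] by blast
  qed
qed

end
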